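(* Fix $x_0$, $\tau\in(0,1)$, $v\in B(0,\rho_{\max})$. There exist a finite set $\mathcal{L}_{T+1}'$ of sequences of non-negative integers of length $T$ and finite positive constants $\beta_{T+1}'^{(j_1,\dots,j_T)}(x_0)$, not depending on $\epsilon$, the control or the observations, such that for every nominal control $u\in U$ left continuous at $\tau$ (with nominal trajectory $x$), every $(y_1,\dots,y_T)$ and every $\epsilon\in[0,\tau]$, $$|h(x^\epsilon(T))-h(x(T))|\le\epsilon\sum_{(j_1,\dots,j_T)\in\mathcal{L}_{T+1}'}\beta_{T+1}'^{(j_1,\dots,j_T)}(x_0)\prod_{m=1}^{T}\|y_m\|_2^{j_m}.$$
   Context: Fix positive integers $T,m,n_x,n_y$ and $\rho_{\max}\in(0,\infty)$; $B(0,\rho_{\max})$ is the closed Euclidean ball of radius $\rho_{\max}$ in $\mathbb{R}^m$; $U$ is the set of piecewise continuous $u:[0,T]\to\mathbb{R}^m$ with $\|u(t)\|_2\le\rho_{\max}$ for all $t$. $f:\mathbb{R}^{n_x}\times\mathbb{R}^m\to\mathbb{R}^{n_x}$ is continuously differentiable and there is $K_1\in[1,\infty)$ with $\|f(x',u')-f(x'',u'')\|_2\le K_1(\|x'-x''\|_2+\|u'-u''\|_2)$ for all $x',x''$ and $u',u''\in B(0,\rho_{\max})$. $g:\mathbb{R}^{n_x}\times\mathbb{R}^{n_y}\to\mathbb{R}^{n_x}$ is continuous and differentiable in its first argument, and there are $K_2,\dots,K_5\ge0$ and positive integers $L_1,L_2$ such that for all $x,y$ both $\|g(x,y)\|_2$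 and $\|\frac{\partial}{\partial x}g(x,y)\|_2$ are at most $K_2+K_3\|x\|_2^{L_1}+K_4\|y\|_2^{L_2}+K_5\|x\|_2^{L_1}\|y\|_2^{L_2}$. For a control $w\in U$ the hybrid trajectory from $x_0$ is: $x_1$ on $[0,1]$ solves $\dot x_1=f(x_1,w)$, $x_1(0)=x_0$; for $i=2,\dots,T$, $x_i$ on $[i-1,i]$ solves $\dot x_i=f(x_i,w)$ with $x_i(i-1)=g(x_{i-1}(i-1),y_{i-1})$; and the final state is $x(T)=g(x_T(T),y_T)$. Perturbed control: for $\epsilon\in[0,\tau]$, $u^\epsilon(t)=v$ if $t\in(\tau-\epsilon,\tau]$ and $u^\epsilon(t)=u(t)$ otherwise; $x^\epsilon$ is the trajectory under $u^\epsilon$ and $x=x^0$. $h:\mathbb{R}^{n_x}\to\mathbb{R}$ is differentiable and there are $K_6,K_7\ge0$ and a positive integer $L_3$ with $|h(x)|,\|\frac{\partial}{\partial x}h(x)\|_2\le K_6+K_7\|x\|_2^{L_3}$ for all $x$. *)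

theory Defs
  imports "HOL-Analysis.Analysis"
begin

definition piecewise_continuous_on :: "real \<Rightarrow> real \<Rightarrow> (real \<Rightarrow> 'a::real_normed_vector) \<Rightarrow> bool" where
  "piecewise_continuous_on a b u \<longleftrightarrow>
     (\<exists>S. finite S \<and> continuous_on ({a..b} - S) u \<and>
        (\<forall>s\<in>S. (a < s \<longrightarrow> (\<exists>l. (u \<longlongrightarrow> l) (at_left s))) \<and>
                (s < b \<longrightarrow> (\<exists>l. (u \<longlongrightarrow> l) (at_right s)))))"

definition admissible_controls :: "nat \<Rightarrow> real \<Rightarrow> (real \<Rightarrow> 'u::real_normed_vector) set" where
  "admissible_controls T \<rho>max =
     {u. piecewise_continuous_on 0 (real T) u \<and> (\<forall>t\<in>{0..real T}. norm (u t) \<le> \<rho>max)}"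

text \<open>Hybrid trajectory: X i is the i-th segment on [i-1,i], solving
  x' = f(x,w) in the (integral / Caratheodory) sense, with resets through g.\<close>
definition hybrid_traj ::
  "('x::euclidean_space \<times> 'u::euclidean_space \<Rightarrow> 'x) \<Rightarrow> ('x \<Rightarrow> 'y \<Rightarrow> 'x) \<Rightarrow> nat \<Rightarrow>
   (real \<Rightarrow> 'u) \<Rightarrow> 'x \<Rightarrow> (nat \<Rightarrow> 'y) \<Rightarrow> (nat \<Rightarrow> real \<Rightarrow> 'x) \<Rightarrow> bool" where
  "hybrid_traj f g T w x0 y X \<longleftrightarrow>
     X 1 0 = x0 \<and>
     (\<forall>i\<in>{2..T}. X i (real i - 1) = g (X (i - 1) (real i - 1)) (y (i - 1))) \<and>
     (\<forall>i\<in>{1..T}. \<forall>t\<in>{real i - 1..real i}.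
        ((\<lambda>s. f (X i s, w s)) has_integral (X i t - X i (real i - 1))) {real i - 1..t})"

definition hybrid_final :: "('x \<Rightarrow> 'y \<Rightarrow> 'x) \<Rightarrow> nat \<Rightarrow> (nat \<Rightarrow> 'y) \<Rightarrow> (nat \<Rightarrow> real \<Rightarrow> 'x) \<Rightarrow> 'x" where
  "hybrid_final g T y X = g (X T (real T)) (y T)"

definition needle :: "(real \<Rightarrow> 'u) \<Rightarrow> real \<Rightarrow> 'u \<Rightarrow> real \<Rightarrow> real \<Rightarrow> 'u" where
  "needle u \<tau> v \<epsilon> t = (if t \<in> {\<tau> - \<epsilon><..\<tau>} then v else u t)"

end

theory Submission
  imports Defs
begin

text \<open>On each unit time segment the dynamics is Lipschitz, so Gronwall's inequality bounds the
  state affinely by its value at the start of the segment, and bounds the distance between the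
  nominal and the needle-perturbed trajectory by the initial distance plus the L1 size of the
  control perturbation; the latter is O(\<epsilon>) and only occurs in the first segment. The resets g
  and their derivatives grow polynomially, so by induction over the segments the states are bounded
  by a constant times a power of Y = \<Prod>m. max 1 |y m|, and the distance by \<epsilon> times such a
  quantity. The mean value inequality for h then gives |h(x_\<epsilon>(T)) - h(x(T))| \<le> \<epsilon> C Y^N,
  and Y^N is dominated by the sum of the monomials \<Prod>m. |y m|^(j m) over exponents j m \<in> {0, N}.\<close>

lemma gronwall_inequality:
  fixes \<psi> :: "real \<Rightarrow> real"
  assumes cont: "continuous_on {a..b} \<psi>" and K: "0 \<le> K"
    and le: "\<And>s. s \<in> {a..b} \<Longrightarrow> \<psi> s \<le> c + K * integral {a..s} \<psi>"
    and t: "t \<in> {a..b}"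
  shows "\<psi> t \<le> c * exp (K * (t - a))"
proof -
  \<comment> \<open>The bound times the integrating factor is non-increasing.\<close>
  define H where "H s = (c + K * integral {a..s} \<psi>) * exp (- K * (s - a))" for s
  define H' where "H' s = (K * \<psi> s - K * (c + K * integral {a..s} \<psi>)) * exp (- K * (s - a))" for s
  have at: "a \<le> t" using t by auto
  have contt: "continuous_on {a..t} \<psi>" using cont t by (auto intro: continuous_on_subset)
  have "(H has_derivative (\<lambda>r. H' s * r)) (at s within {a..t})" if "s \<in> {a..t}" for s
  proof -
    have "((\<lambda>r. integral {a..r} \<psi>) has_real_derivative \<psi> s) (at s within {a..t})"
      using integral_has_vector_derivative[OF contt that]
      by (simp add: has_real_derivative_iff_has_vector_derivative)
    then have "(H has_real_derivative H' s) (at s within {a..t})"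
      unfolding H_def H'_def by (auto intro!: derivative_eq_intros simp: algebra_simps)
    then show ?thesis by (simp add: has_field_derivative_def)
  qed
  then obtain s where s: "s \<in> {a..t}" and eq: "H t - H a = H' s * (t - a)"
    using mvt_very_simple[OF at, of H "\<lambda>s r. H' s * r"] by auto
  have "\<psi> s \<le> c + K * integral {a..s} \<psi>" using le s t by auto
  then have "H' s \<le> 0"
    unfolding H'_def using K by (intro mult_nonpos_nonneg) (auto simp: mult_left_mono)
  then have "H t \<le> H a" using eq at mult_nonpos_nonneg[of "H' s" "t - a"] by linarith
  then have "(c + K * integral {a..t} \<psi>) * exp (- K * (t - a)) \<le> c" by (simp add: H_def)
  then have "(c + K * integral {a..t} \<psi>) * exp (- K * (t - a)) * exp (K * (t - a)) \<le> c * exp (K * (t - a))"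
    by (rule mult_right_mono) simp
  then have "c + K * integral {a..t} \<psi> \<le> c * exp (K * (t - a))"
    by (simp add: mult.assoc flip: exp_add)
  then show ?thesis using le t by force
qed

lemma gronwall_integral_bound:
  fixes G :: "real \<Rightarrow> 'a::banach" and \<psi> \<delta> :: "real \<Rightarrow> real"
  assumes cont: "continuous_on {a..b} \<psi>" and G: "G integrable_on {a..b}"
    and \<delta>: "\<delta> integrable_on {a..b}" "\<And>s. s \<in> {a..b} \<Longrightarrow> 0 \<le> \<delta> s" and K: "0 \<le> K"
    and G_le: "\<And>s. s \<in> {a..b} \<Longrightarrow> norm (G s) \<le> \<delta> s + K * \<psi> s"
    and \<psi>_le: "\<And>s. s \<in> {a..b} \<Longrightarrow> \<psi> s \<le> \<psi>0 + norm (integral {a..s} G)"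
    and t: "t \<in> {a..b}"
  shows "\<psi> t \<le> (\<psi>0 + integral {a..b} \<delta>) * exp (K * (t - a))"
proof (rule gronwall_inequality[OF cont K _ t])
  fix s assume s: "s \<in> {a..b}"
  then have sub: "{a..s} \<subseteq> {a..b}" by auto
  have \<psi>_int: "\<psi> integrable_on {a..s}"
    using cont sub by (meson continuous_on_subset integrable_continuous_real)
  have \<delta>_int: "\<delta> integrable_on {a..s}" using \<delta>(1) sub integrable_on_subinterval by blast
  have "norm (integral {a..s} G) \<le> integral {a..s} (\<lambda>r. \<delta> r + K * \<psi> r)"
    using G sub \<delta>_int \<psi>_int G_le
    by (intro integral_norm_bound_integral integrable_add integrable_on_mult_right)
      (auto intro: integrable_on_subinterval)
  also have "\<dots> = integral {a..s} \<delta> + K * integral {a..s} \<psi>"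
    using \<delta>_int \<psi>_int by (simp add: integral_add integrable_on_mult_right)
  also have "integral {a..s} \<delta> \<le> integral {a..b} \<delta>"
    using sub \<delta> \<delta>_int by (intro integral_subset_le) auto
  finally show "\<psi> s \<le> \<psi>0 + integral {a..b} \<delta> + K * integral {a..s} \<psi>"
    using \<psi>_le[OF s] by linarith
qed

definition integral_solution ::
  "('x::banach \<times> 'u \<Rightarrow> 'x) \<Rightarrow> (real \<Rightarrow> 'u) \<Rightarrow> real \<Rightarrow> real \<Rightarrow> (real \<Rightarrow> 'x) \<Rightarrow> bool" where
  "integral_solution f w a b X \<longleftrightarrow>
     (\<forall>t\<in>{a..b}. ((\<lambda>s. f (X s, w s)) has_integral (X t - X a)) {a..t})"

lemma integral_solution_integrable:
  "integral_solution f w a b X \<Longrightarrow> a \<le> b \<Longrightarrow> (\<lambda>s. f (X s, w s)) integrable_on {a..b}"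
  unfolding integral_solution_def by auto

lemma integral_solution_eq:
  assumes "integral_solution f w a b X" "t \<in> {a..b}"
  shows "X t = X a + integral {a..t} (\<lambda>s. f (X s, w s))"
proof -
  have "((\<lambda>s. f (X s, w s)) has_integral (X t - X a)) {a..t}"
    using assms unfolding integral_solution_def by blast
  then show ?thesis by (simp add: integral_unique)
qed

lemma integral_solution_continuous:
  assumes "integral_solution f w a b X"
  shows "continuous_on {a..b} X"
proof (cases "a \<le> b")
  case True
  have "continuous_on {a..b} (\<lambda>t. X a + integral {a..t} (\<lambda>s. f (X s, w s)))"
    by (intro continuous_intros indefinite_integral_continuous_1 integral_solution_integrable[OF assms True])
  then show ?thesis
    by (rule continuous_on_eq) (simp add: integral_solution_eq[OF assms, symmetric])
qed simp

lemma integral_solution_norm_le: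
  fixes f :: "'x::banach \<times> 'u::real_normed_vector \<Rightarrow> 'x"
  assumes lip: "\<And>x1 x2 u1 u2. u1 \<in> cball 0 \<rho> \<Longrightarrow> u2 \<in> cball 0 \<rho> \<Longrightarrow>
                 norm (f (x1, u1) - f (x2, u2)) \<le> K * (norm (x1 - x2) + norm (u1 - u2))"
    and K: "0 \<le> K" and sol: "integral_solution f w a b X"
    and w: "\<And>s. s \<in> {a..b} \<Longrightarrow> norm (w s) \<le> \<rho>"
    and t: "t \<in> {a..b}"
  shows "norm (X t) \<le> (norm (X a) + (b - a) * (norm (f (0, 0)) + K * \<rho>)) * exp (K * (b - a))"
proof -
  define c where "c = norm (f (0, 0)) + K * \<rho>"
  have \<rho>: "0 \<le> \<rho>" using w[OF t] norm_ge_zero order_trans by blast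
  then have c: "0 \<le> c" using K by (simp add: c_def)
  have "norm (X t) \<le> (norm (X a) + integral {a..b} (\<lambda>_. c)) * exp (K * (t - a))"
  proof (rule gronwall_integral_bound[where G = "\<lambda>s. f (X s, w s)"])
    show "continuous_on {a..b} (\<lambda>t. norm (X t))"
      using integral_solution_continuous[OF sol] by (intro continuous_intros)
    show "(\<lambda>s. f (X s, w s)) integrable_on {a..b}"
      using integral_solution_integrable[OF sol] t by auto
    show "norm (f (X s, w s)) \<le> c + K * norm (X s)" if "s \<in> {a..b}" for s
    proof -
      have "norm (f (X s, w s) - f (0, 0)) \<le> K * (norm (X s) + norm (w s))"
        using lip[of "w s" 0 "X s" 0] w[OF that] \<rho> by simp
      also have "\<dots> \<le> K * norm (X s) + K * \<rho>"
        using w[OF that] K by (simp add: algebra_simps mult_left_mono)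
      finally show ?thesis unfolding c_def using norm_triangle_sub[of "f (X s, w s)" "f (0, 0)"] by linarith
    qed
    show "norm (X s) \<le> norm (X a) + norm (integral {a..s} (\<lambda>s. f (X s, w s)))" if "s \<in> {a..b}" for s
      using integral_solution_eq[OF sol that] by (metis norm_triangle_ineq)
  qed (use c K t in auto)
  also have "\<dots> \<le> (norm (X a) + (b - a) * c) * exp (K * (b - a))"
    using t K c by (intro mult_mono) (auto simp: mult_left_mono)
  finally show ?thesis unfolding c_def .
qed

lemma integral_solution_dist_le:
  fixes f :: "'x::banach \<times> 'u::real_normed_vector \<Rightarrow> 'x"
  assumes lip: "\<And>x1 x2 u1 u2. u1 \<in> cball 0 \<rho> \<Longrightarrow> u2 \<in> cball 0 \<rho> \<Longrightarrow>
                 norm (f (x1, u1) - f (x2, u2)) \<le> K * (norm (x1 - x2) + norm (u1 - u2))"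
    and K: "0 \<le> K"
    and solX: "integral_solution f w a b X" and solZ: "integral_solution f z a b Z"
    and w: "\<And>s. s \<in> {a..b} \<Longrightarrow> norm (w s) \<le> \<rho>" and z: "\<And>s. s \<in> {a..b} \<Longrightarrow> norm (z s) \<le> \<rho>"
    and \<delta>: "\<delta> integrable_on {a..b}" and wz: "\<And>s. s \<in> {a..b} \<Longrightarrow> norm (w s - z s) \<le> \<delta> s"
    and t: "t \<in> {a..b}"
  shows "norm (X t - Z t) \<le> (norm (X a - Z a) + K * integral {a..b} \<delta>) * exp (K * (b - a))"
proof -
  have ab: "a \<le> b" using t by simp
  have \<delta>_nonneg: "0 \<le> \<delta> s" if "s \<in> {a..b}" for s using wz[OF that] norm_ge_zero order_trans by blast
  have "norm (X t - Z t) \<le> (norm (X a - Z a) + integral {a..b} (\<lambda>s. K * \<delta> s)) * exp (K * (t - a))"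
  proof (rule gronwall_integral_bound[where G = "\<lambda>s. f (X s, w s) - f (Z s, z s)"])
    show "continuous_on {a..b} (\<lambda>t. norm (X t - Z t))"
      using integral_solution_continuous[OF solX] integral_solution_continuous[OF solZ]
      by (intro continuous_intros)
    show "(\<lambda>s. f (X s, w s) - f (Z s, z s)) integrable_on {a..b}"
      using integral_solution_integrable[OF solX ab] integral_solution_integrable[OF solZ ab]
      by (rule integrable_diff)
    show "norm (f (X s, w s) - f (Z s, z s)) \<le> K * \<delta> s + K * norm (X s - Z s)" if "s \<in> {a..b}" for s
    proof -
      have "norm (f (X s, w s) - f (Z s, z s)) \<le> K * norm (X s - Z s) + K * norm (w s - z s)"
        using lip[of "w s" "z s" "X s" "Z s"] w[OF that] z[OF that] by (simp add: distrib_left)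
      moreover have "K * norm (w s - z s) \<le> K * \<delta> s" using wz[OF that] K by (rule mult_left_mono)
      ultimately show ?thesis by linarith
    qed
    show "norm (X s - Z s) \<le> norm (X a - Z a) + norm (integral {a..s} (\<lambda>s. f (X s, w s) - f (Z s, z s)))"
      if s: "s \<in> {a..b}" for s
    proof -
      have "{a..s} \<subseteq> {a..b}" using s by auto
      then have "integral {a..s} (\<lambda>s. f (X s, w s) - f (Z s, z s))
          = integral {a..s} (\<lambda>s. f (X s, w s)) - integral {a..s} (\<lambda>s. f (Z s, z s))"
        using integral_solution_integrable[OF solX ab] integral_solution_integrable[OF solZ ab]
        by (intro integral_diff) (auto intro: integrable_on_subinterval)
      then have "X s - Z s = (X a - Z a) + integral {a..s} (\<lambda>s. f (X s, w s) - f (Z s, z s))"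
        using integral_solution_eq[OF solX s] integral_solution_eq[OF solZ s] by simp
      then show ?thesis by (metis norm_triangle_ineq)
    qed
  qed (use \<delta> \<delta>_nonneg K t in \<open>auto intro: integrable_on_mult_right\<close>)
  also have "\<dots> \<le> (norm (X a - Z a) + K * integral {a..b} \<delta>) * exp (K * (b - a))"
    using t K integral_nonneg[OF \<delta> \<delta>_nonneg] by (intro mult_mono) (auto simp: mult_left_mono)
  finally show ?thesis .
qed

lemma norm_diff_le_on_cball:
  fixes F :: "'a::real_normed_vector \<Rightarrow> 'b::real_normed_vector"
  assumes "\<And>x. (F has_derivative blinfun_apply (DF x)) (at x)"
    and "\<And>x. norm x \<le> R \<Longrightarrow> norm (DF x) \<le> M"
    and "norm p \<le> R" "norm q \<le> R"
  shows "norm (F p - F q) \<le> M * norm (p - q)"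
  using assms
  by (intro differentiable_bound[where S = "cball 0 R" and f' = "\<lambda>x. blinfun_apply (DF x)"])
    (auto intro: has_derivative_at_withinI simp: norm_blinfun.rep_eq)

lemma has_integral_indicator_subinterval:
  fixes k :: real
  assumes "a \<le> c" "c \<le> d" "d \<le> b"
  shows "((\<lambda>s. indicator {c..d} s * k) has_integral (d - c) * k) {a..b}"
proof -
  have "{c..d} \<inter> {a..b} = {c..d}" using assms by auto
  then have "((\<lambda>s. if s \<in> {c..d} then k else 0) has_integral (d - c) * k) {a..b}"
    using has_integral_const_real[of k c d] assms by (simp only: has_integral_restrict_Int) simp
  moreover have "(\<lambda>s. indicator {c..d} s * k) = (\<lambda>s. if s \<in> {c..d} then k else 0)"
    by (auto simp: indicator_def)
  ultimately show ?thesis by metis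
qed

lemma norm_needle_diff_le:
  assumes "norm v \<le> \<rho>" "norm (u s) \<le> \<rho>"
  shows "norm (needle u \<tau> v \<epsilon> s - u s) \<le> indicator {\<tau> - \<epsilon>..\<tau>} s * (2 * \<rho>)"
proof (cases "s \<in> {\<tau> - \<epsilon><..\<tau>}")
  case True
  then have "norm (needle u \<tau> v \<epsilon> s - u s) \<le> norm v + norm (u s)"
    by (simp add: needle_def norm_triangle_ineq4)
  with True assms show ?thesis by simp
next
  case False
  have "0 \<le> \<rho>" using assms(1) norm_ge_zero order_trans by blast
  with False show ?thesis by (auto simp: needle_def)
qed

lemma hybrid_traj_segment:
  "hybrid_traj f g T w x0 y X \<Longrightarrow> i \<in> {1..T} \<Longrightarrow> integral_solution f w (real i - 1) (real i) (X i)"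
  unfolding hybrid_traj_def integral_solution_def by blast

lemma hybrid_traj_reset:
  assumes "hybrid_traj f g T w x0 y X" "Suc n \<in> {2..T}"
  shows "X (Suc n) (real n) = g (X n (real n)) (y n)"
proof -
  have "X (Suc n) (real (Suc n) - 1) = g (X (Suc n - 1) (real (Suc n) - 1)) (y (Suc n - 1))"
    using assms unfolding hybrid_traj_def by blast
  then show ?thesis by simp
qed

lemma prod_max_one_power_le_sum:
  fixes a :: "nat \<Rightarrow> real"
  assumes a: "\<And>m. 0 \<le> a m"
  shows "(\<Prod>m\<in>{1..T}. max 1 (a m)) ^ N
    \<le> (\<Sum>js\<in>{js. set js \<subseteq> {0, N} \<and> length js = T}. \<Prod>m\<in>{1..T}. a m ^ (js ! (m - 1)))"
proof -
  \<comment> \<open>The summand with exponent N exactly where a m \<ge> 1 equals the left-hand side.\<close>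
  define js where "js = map (\<lambda>k. if 1 \<le> a (Suc k) then N else 0) [0..<T]"
  have js: "js \<in> {js. set js \<subseteq> {0, N} \<and> length js = T}" by (auto simp: js_def)
  have "(\<Prod>m\<in>{1..T}. max 1 (a m)) ^ N = (\<Prod>m\<in>{1..T}. a m ^ (js ! (m - 1)))"
    unfolding prod_power_distrib by (rule prod.cong) (auto simp: js_def max_def)
  also have "\<dots> \<le> (\<Sum>js\<in>{js. set js \<subseteq> {0, N} \<and> length js = T}. \<Prod>m\<in>{1..T}. a m ^ (js ! (m - 1)))"
    using a by (intro member_le_sum[OF js] prod_nonneg zero_le_power finite_lists_length_eq) auto
  finally show ?thesis .
qed

lemma affine_power_bound_le:
  fixes Y P c E :: real
  assumes "1 \<le> Y" "0 \<le> P" "0 \<le> c" "0 \<le> E"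
  shows "(P * Y ^ k + c) * E \<le> (P + c) * E * Y ^ (k + m)"
proof -
  have "Y ^ k \<le> Y ^ (k + m)" "1 \<le> Y ^ (k + m)" using assms(1) by (auto intro: power_increasing)
  then have "P * Y ^ k + c \<le> (P + c) * Y ^ (k + m)"
    using assms(2,3) mult_left_mono[of "Y ^ k" "Y ^ (k + m)" P] mult_left_mono[of 1 "Y ^ (k + m)" c]
    by (simp add: algebra_simps)
  then show ?thesis using assms(4) by (metis mult.assoc mult.commute mult_right_mono)
qed

locale needle_variation =
  fixes f :: "'x::euclidean_space \<times> 'u::euclidean_space \<Rightarrow> 'x"
    and g :: "'x \<Rightarrow> 'y::euclidean_space \<Rightarrow> 'x" and Dg :: "'x \<Rightarrow> 'y \<Rightarrow> 'x \<Rightarrow>\<^sub>L 'x"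
    and h :: "'x \<Rightarrow> real" and Dh :: "'x \<Rightarrow> 'x \<Rightarrow>\<^sub>L real"
    and T L1 L2 L3 :: nat and \<rho> K1 K2 K3 K4 K5 K6 K7 \<tau> :: real and x0 :: 'x and v :: 'u
  assumes f_lip: "\<And>x1 x2 u1 u2. u1 \<in> cball 0 \<rho> \<Longrightarrow> u2 \<in> cball 0 \<rho> \<Longrightarrow>
                   norm (f (x1, u1) - f (x2, u2)) \<le> K1 * (norm (x1 - x2) + norm (u1 - u2))"
    and K1: "0 \<le> K1"
    and g_diff: "\<And>x y. ((\<lambda>z. g z y) has_derivative blinfun_apply (Dg x y)) (at x)"
    and g_bound: "\<And>x y. norm (g x y) \<le> K2 + K3 * norm x ^ L1 + K4 * norm y ^ L2 + K5 * norm x ^ L1 * norm y ^ L2"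
    and Dg_bound: "\<And>x y. norm (Dg x y) \<le> K2 + K3 * norm x ^ L1 + K4 * norm y ^ L2 + K5 * norm x ^ L1 * norm y ^ L2"
    and K2345: "0 \<le> K2" "0 \<le> K3" "0 \<le> K4" "0 \<le> K5"
    and h_diff: "\<And>x. (h has_derivative blinfun_apply (Dh x)) (at x)"
    and Dh_bound: "\<And>x. norm (Dh x) \<le> K6 + K7 * norm x ^ L3"
    and K67: "0 \<le> K6" "0 \<le> K7"
    and tau: "\<tau> < 1"
    and v: "norm v \<le> \<rho>"
begin

definition reset_growth :: "real \<Rightarrow> real \<Rightarrow> real" where
  "reset_growth R r = K2 + K3 * R ^ L1 + K4 * r ^ L2 + K5 * R ^ L1 * r ^ L2"

definition cost_growth :: "real \<Rightarrow> real" where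
  "cost_growth R = K6 + K7 * R ^ L3"

definition drift_bound :: real where
  "drift_bound = norm (f (0, 0)) + K1 * \<rho>"

lemma rho_nonneg: "0 \<le> \<rho>"
  using v norm_ge_zero order_trans by blast

lemma drift_bound_nonneg: "0 \<le> drift_bound"
  using K1 rho_nonneg by (simp add: drift_bound_def)

lemma reset_growth_nonneg: "0 \<le> R \<Longrightarrow> 0 \<le> r \<Longrightarrow> 0 \<le> reset_growth R r"
  using K2345 by (simp add: reset_growth_def)

lemma reset_growth_mono:
  assumes "0 \<le> R" "R \<le> R'" "0 \<le> r" "r \<le> r'"
  shows "reset_growth R r \<le> reset_growth R' r'"
proof -
  have "R ^ L1 \<le> R' ^ L1" "r ^ L2 \<le> r' ^ L2" using assms by (auto intro: power_mono)
  moreover have "R ^ L1 * r ^ L2 \<le> R' ^ L1 * r' ^ L2" using assms by (intro mult_mono power_mono) auto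
  ultimately show ?thesis
    unfolding reset_growth_def mult.assoc using K2345 by (intro add_mono mult_left_mono order.refl) auto
qed

lemma reset_growth_le_power:
  assumes Y: "1 \<le> Y" and A: "0 \<le> A"
  shows "reset_growth (A * Y ^ D) Y \<le> reset_growth A 1 * Y ^ (D * L1 + L2)"
proof -
  define E where "E = Y ^ (D * L1 + L2)"
  have E: "Y ^ (D * L1) \<le> E" "Y ^ L2 \<le> E" "1 \<le> E" "Y ^ (D * L1) * Y ^ L2 = E"
    using Y by (auto simp: E_def power_add[symmetric] intro: power_increasing)
  have AY: "(A * Y ^ D) ^ L1 = A ^ L1 * Y ^ (D * L1)"
    by (simp add: power_mult_distrib power_mult)
  have "K2 \<le> K2 * E" using K2345 E by (simp add: mult_le_cancel_left1)
  moreover have "K3 * (A ^ L1 * Y ^ (D * L1)) \<le> K3 * (A ^ L1 * E)"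
    using K2345 A E by (intro mult_left_mono) auto
  moreover have "K4 * Y ^ L2 \<le> K4 * E" using K2345 E by (intro mult_left_mono) auto
  moreover have "K5 * (A ^ L1 * Y ^ (D * L1)) * Y ^ L2 = K5 * A ^ L1 * E"
    using E by (simp add: mult.assoc)
  moreover have "reset_growth A 1 * E = K2 * E + K3 * (A ^ L1 * E) + K4 * E + K5 * A ^ L1 * E"
    by (simp add: reset_growth_def algebra_simps)
  ultimately show ?thesis
    unfolding reset_growth_def AY E_def[symmetric] power_one mult_1_right by linarith
qed

lemma cost_growth_nonneg: "0 \<le> R \<Longrightarrow> 0 \<le> cost_growth R"
  using K67 by (simp add: cost_growth_def)

lemma cost_growth_mono: "0 \<le> R \<Longrightarrow> R \<le> R' \<Longrightarrow> cost_growth R \<le> cost_growth R'"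
  unfolding cost_growth_def using K67 by (auto intro: mult_left_mono power_mono)

lemma cost_growth_le_power:
  assumes Y: "1 \<le> Y" and A: "0 \<le> A"
  shows "cost_growth (A * Y ^ D) \<le> cost_growth A * Y ^ (D * L3)"
proof -
  have "K6 \<le> K6 * Y ^ (D * L3)" using Y K67 by (simp add: mult_le_cancel_left1)
  then show ?thesis
    by (simp add: cost_growth_def power_mult algebra_simps)
qed

lemma g_norm_le: "norm (g x y) \<le> reset_growth (norm x) (norm y)"
  using g_bound by (simp add: reset_growth_def)

lemma Dg_norm_le: "norm (Dg x y) \<le> reset_growth (norm x) (norm y)"
  using Dg_bound by (simp add: reset_growth_def)

lemma g_dist_le:
  assumes "norm p \<le> R" "norm q \<le> R"
  shows "norm (g q y - g p y) \<le> reset_growth R (norm y) * norm (q - p)"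
proof (rule norm_diff_le_on_cball[OF g_diff _ assms(2,1)])
  fix x :: 'x assume "norm x \<le> R"
  then show "norm (Dg x y) \<le> reset_growth R (norm y)"
    using Dg_norm_le[of x y] reset_growth_mono[of "norm x" R "norm y" "norm y"] by simp
qed

lemma h_dist_le:
  assumes "norm p \<le> R" "norm q \<le> R"
  shows "\<bar>h q - h p\<bar> \<le> cost_growth R * norm (q - p)"
proof -
  have "norm (h q - h p) \<le> cost_growth R * norm (q - p)"
  proof (rule norm_diff_le_on_cball[OF h_diff _ assms(2,1)])
    fix x :: 'x assume "norm x \<le> R"
    then show "norm (Dh x) \<le> cost_growth R"
      using Dh_bound[of x] cost_growth_mono[of "norm x" R] by (simp add: cost_growth_def)
  qed
  then show ?thesis by simp
qed

lemma g_norm_le_power: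
  assumes "1 \<le> Y" "0 \<le> A" "norm p \<le> A * Y ^ D" "norm r \<le> Y"
  shows "norm (g p r) \<le> reset_growth A 1 * Y ^ (D * L1 + L2)"
  using g_norm_le[of p r] reset_growth_mono[of "norm p" "A * Y ^ D" "norm r" Y]
    reset_growth_le_power[of Y A D] assms by simp

lemma g_dist_le_power:
  assumes "1 \<le> Y" "0 \<le> A" "norm p \<le> A * Y ^ D" "norm q \<le> A * Y ^ D" "norm r \<le> Y"
    and "norm (q - p) \<le> G"
  shows "norm (g q r - g p r) \<le> reset_growth A 1 * Y ^ (D * L1 + L2) * G"
proof -
  have "norm (g q r - g p r) \<le> reset_growth (A * Y ^ D) (norm r) * norm (q - p)"
    using g_dist_le[OF assms(3,4)] .
  also have "\<dots> \<le> reset_growth A 1 * Y ^ (D * L1 + L2) * G"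
  proof (rule mult_mono)
    show "reset_growth (A * Y ^ D) (norm r) \<le> reset_growth A 1 * Y ^ (D * L1 + L2)"
      using reset_growth_mono[of "A * Y ^ D" "A * Y ^ D" "norm r" Y] reset_growth_le_power[of Y A D]
        assms by simp
  qed (use assms reset_growth_nonneg in auto)
  finally show ?thesis .
qed

lemma segment_norm_le:
  assumes Z: "hybrid_traj f g T w x0 y Z" and w: "\<And>s. s \<in> {0..real T} \<Longrightarrow> norm (w s) \<le> \<rho>"
    and i: "i \<in> {1..T}"
  shows "norm (Z i i) \<le> (norm (Z i (real i - 1)) + drift_bound) * exp K1"
proof -
  have "norm (Z i i) \<le> (norm (Z i (real i - 1)) + (real i - (real i - 1)) * drift_bound)
      * exp (K1 * (real i - (real i - 1)))"
    unfolding drift_bound_def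
    by (rule integral_solution_norm_le[OF f_lip K1 hybrid_traj_segment[OF Z i]]) (use w i in auto)
  then show ?thesis by simp
qed

lemma segment_norm_le_power:
  assumes Z: "hybrid_traj f g T w x0 y Z" and w: "\<And>s. s \<in> {0..real T} \<Longrightarrow> norm (w s) \<le> \<rho>"
    and i: "Suc i \<in> {1..T}" and Y: "1 \<le> Y" and P: "0 \<le> P"
    and start: "norm (Z (Suc i) i) \<le> P * Y ^ k"
  shows "norm (Z (Suc i) (Suc i)) \<le> (P + drift_bound) * exp K1 * Y ^ (k + m)"
proof -
  have "norm (Z (Suc i) (Suc i)) \<le> (norm (Z (Suc i) (real (Suc i) - 1)) + drift_bound) * exp K1"
    by (rule segment_norm_le[OF Z w i])
  also have "\<dots> \<le> (P * Y ^ k + drift_bound) * exp K1"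
    using start by (intro mult_right_mono) simp_all
  also have "\<dots> \<le> (P + drift_bound) * exp K1 * Y ^ (k + m)"
    using affine_power_bound_le[OF Y P drift_bound_nonneg] by simp
  finally show ?thesis .
qed

text \<open>At the end of segment n + 1 both states are bounded by state_bound n * Y ^ bound_degree n
  and their distance by \<epsilon> * gap_bound n * Y ^ bound_degree n, where Y = obs_size y.\<close>

primrec state_bound :: "nat \<Rightarrow> real" where
  "state_bound 0 = (norm x0 + drift_bound) * exp K1"
| "state_bound (Suc n) = (reset_growth (state_bound n) 1 + drift_bound) * exp K1"

primrec gap_bound :: "nat \<Rightarrow> real" where
  "gap_bound 0 = 2 * K1 * \<rho> * exp K1"
| "gap_bound (Suc n) = reset_growth (state_bound n) 1 * gap_bound n * exp K1"

primrec bound_degree :: "nat \<Rightarrow> nat" where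
  "bound_degree 0 = 0"
| "bound_degree (Suc n) = bound_degree n * L1 + L2 + bound_degree n"

definition obs_size :: "(nat \<Rightarrow> 'y) \<Rightarrow> real" where
  "obs_size y = (\<Prod>m\<in>{1..T}. max 1 (norm (y m)))"

definition final_gap_const :: real where
  "final_gap_const = cost_growth (reset_growth (state_bound (T - 1)) 1)
     * reset_growth (state_bound (T - 1)) 1 * gap_bound (T - 1)"

definition final_degree :: nat where
  "final_degree = (bound_degree (T - 1) * L1 + L2) * L3 + (bound_degree (T - 1) * L1 + L2)
     + bound_degree (T - 1)"

lemma state_bound_nonneg: "0 \<le> state_bound n"
  by (induction n) (simp_all add: drift_bound_nonneg reset_growth_nonneg)

lemma gap_bound_nonneg: "0 \<le> gap_bound n"
  by (induction n) (simp_all add: K1 rho_nonneg reset_growth_nonneg state_bound_nonneg)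

lemma final_gap_const_nonneg: "0 \<le> final_gap_const"
  unfolding final_gap_const_def cost_growth_def
  using K67 reset_growth_nonneg state_bound_nonneg gap_bound_nonneg by simp

lemma one_le_obs_size: "1 \<le> obs_size y"
  by (simp add: obs_size_def prod_ge_1)

lemma norm_le_obs_size:
  assumes "m \<in> {1..T}"
  shows "norm (y m) \<le> obs_size y"
proof -
  have "max 1 (norm (y m)) * 1 \<le> max 1 (norm (y m)) * (\<Prod>k\<in>{1..T} - {m}. max 1 (norm (y k)))"
    by (intro mult_left_mono prod_ge_1) auto
  then show ?thesis
    using assms by (simp add: obs_size_def prod.remove)
qed

lemma obs_size_power_le_sum:
  "obs_size y ^ N
    \<le> (\<Sum>js\<in>{js. set js \<subseteq> {0, N} \<and> length js = T}. \<Prod>m\<in>{1..T}. norm (y m) ^ (js ! (m - 1)))"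
  unfolding obs_size_def by (rule prod_max_one_power_le_sum) simp

context
  fixes u :: "real \<Rightarrow> 'u" and y :: "nat \<Rightarrow> 'y" and \<epsilon> :: real and X Xe :: "nat \<Rightarrow> real \<Rightarrow> 'x"
  assumes u: "u \<in> admissible_controls T \<rho>" and \<epsilon>: "\<epsilon> \<in> {0..\<tau>}"
    and X: "hybrid_traj f g T u x0 y X" and Xe: "hybrid_traj f g T (needle u \<tau> v \<epsilon>) x0 y Xe"
begin

lemma nominal_control_bounded: "s \<in> {0..real T} \<Longrightarrow> norm (u s) \<le> \<rho>"
  using u by (simp add: admissible_controls_def)

lemma needle_control_bounded: "s \<in> {0..real T} \<Longrightarrow> norm (needle u \<tau> v \<epsilon> s) \<le> \<rho>"
  using nominal_control_bounded v by (simp add: needle_def)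

lemma first_segment_gap_le:
  assumes T: "1 \<le> T"
  shows "norm (Xe 1 1 - X 1 1) \<le> \<epsilon> * gap_bound 0"
proof -
  define \<delta> where "\<delta> s = indicator {\<tau> - \<epsilon>..\<tau>} s * (2 * \<rho>)" for s
  have \<delta>: "(\<delta> has_integral \<epsilon> * (2 * \<rho>)) {0..1}"
    unfolding \<delta>_def using has_integral_indicator_subinterval[of 0 "\<tau> - \<epsilon>" \<tau> 1] \<epsilon> tau by simp
  have "norm (Xe 1 1 - X 1 1) \<le> (norm (Xe 1 0 - X 1 0) + K1 * integral {0..1} \<delta>) * exp (K1 * (1 - 0))"
  proof (rule integral_solution_dist_le[OF f_lip K1])
    show "integral_solution f (needle u \<tau> v \<epsilon>) 0 1 (Xe 1)" "integral_solution f u 0 1 (X 1)"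
      using hybrid_traj_segment[OF Xe, of 1] hybrid_traj_segment[OF X, of 1] T by simp_all
    show "norm (needle u \<tau> v \<epsilon> s - u s) \<le> \<delta> s" if "s \<in> {0..1}" for s
      unfolding \<delta>_def using norm_needle_diff_le[of v \<rho> u s \<tau> \<epsilon>] v nominal_control_bounded[of s] that T by simp
  qed (use \<delta> T nominal_control_bounded needle_control_bounded in auto)
  moreover have "X 1 0 = x0" "Xe 1 0 = x0" using X Xe by (simp_all add: hybrid_traj_def)
  ultimately show ?thesis using \<delta> by (simp add: integral_unique algebra_simps)
qed

lemma later_segment_gap_le:
  assumes i: "i \<in> {2..T}"
  shows "norm (Xe i i - X i i) \<le> norm (Xe i (real i - 1) - X i (real i - 1)) * exp K1"
proof -
  \<comment> \<open>The needle lies in the first segment, so both trajectories follow the same control here.\<close>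
  have same: "needle u \<tau> v \<epsilon> s = u s" if "s \<in> {real i - 1..real i}" for s
    using that i tau by (auto simp: needle_def)
  have "norm (Xe i i - X i i)
      \<le> (norm (Xe i (real i - 1) - X i (real i - 1)) + K1 * integral {real i - 1..real i} (\<lambda>_. 0))
        * exp (K1 * (real i - (real i - 1)))"
  proof (rule integral_solution_dist_le[OF f_lip K1])
    show "integral_solution f (needle u \<tau> v \<epsilon>) (real i - 1) (real i) (Xe i)"
      "integral_solution f u (real i - 1) (real i) (X i)"
      using hybrid_traj_segment[OF Xe, of i] hybrid_traj_segment[OF X, of i] i by auto
  qed (use i same nominal_control_bounded needle_control_bounded in auto)
  then show ?thesis by simp
qed

lemma segment_endpoint_bounds:
  assumes "n < T"
  shows "norm (X (Suc n) (Suc n)) \<le> state_bound n * obs_size y ^ bound_degree n \<and>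
    norm (Xe (Suc n) (Suc n)) \<le> state_bound n * obs_size y ^ bound_degree n \<and>
    norm (Xe (Suc n) (Suc n) - X (Suc n) (Suc n)) \<le> \<epsilon> * gap_bound n * obs_size y ^ bound_degree n"
  using assms
proof (induction n)
  case 0
  then have T: "1 \<le> T" by simp
  have "X 1 0 = x0" "Xe 1 0 = x0" using X Xe by (simp_all add: hybrid_traj_def)
  then show ?case
    using segment_norm_le[OF X nominal_control_bounded, of 1] first_segment_gap_le[OF T]
      segment_norm_le[OF Xe needle_control_bounded, of 1] T by simp
next
  case (Suc n)
  define Y A B D where "Y = obs_size y" and "A = state_bound n" and "B = gap_bound n"
    and "D = bound_degree n"
  define P D' where "P = reset_growth A 1" and "D' = D * L1 + L2"
  have IH: "norm (X (Suc n) (Suc n)) \<le> A * Y ^ D" "norm (Xe (Suc n) (Suc n)) \<le> A * Y ^ D"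
    "norm (Xe (Suc n) (Suc n) - X (Suc n) (Suc n)) \<le> \<epsilon> * B * Y ^ D"
    using Suc by (simp_all add: Y_def A_def B_def D_def)
  have Y: "1 \<le> Y" and A: "0 \<le> A" and P: "0 \<le> P" and y: "norm (y (Suc n)) \<le> Y"
    using one_le_obs_size state_bound_nonneg reset_growth_nonneg norm_le_obs_size[of "Suc n" y] Suc.prems
    by (simp_all add: Y_def A_def P_def)
  have "Suc (Suc n) \<in> {2..T}" using Suc.prems by simp
  note reset = hybrid_traj_reset[OF X this] hybrid_traj_reset[OF Xe this]
  have start: "norm (X (Suc (Suc n)) (Suc n)) \<le> P * Y ^ D'" "norm (Xe (Suc (Suc n)) (Suc n)) \<le> P * Y ^ D'"
    using g_norm_le_power[OF Y A IH(1) y] g_norm_le_power[OF Y A IH(2) y] reset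
    by (simp_all add: P_def D'_def)
  have "norm (Xe (Suc (Suc n)) (Suc (Suc n)) - X (Suc (Suc n)) (Suc (Suc n)))
      \<le> norm (Xe (Suc (Suc n)) (real (Suc (Suc n)) - 1) - X (Suc (Suc n)) (real (Suc (Suc n)) - 1))
        * exp K1"
    by (rule later_segment_gap_le) (use Suc.prems in simp)
  also have "\<dots> \<le> P * Y ^ D' * (\<epsilon> * B * Y ^ D) * exp K1"
    using g_dist_le_power[OF Y A IH(1,2) y IH(3)] reset
    by (intro mult_right_mono) (simp_all add: P_def D'_def)
  also have "\<dots> = \<epsilon> * (P * B * exp K1) * Y ^ (D' + D)"
    by (simp add: power_add mult_ac)
  finally have gap: "norm (Xe (Suc (Suc n)) (Suc (Suc n)) - X (Suc (Suc n)) (Suc (Suc n)))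
      \<le> \<epsilon> * (P * B * exp K1) * Y ^ (D' + D)" .
  have bound_Suc: "state_bound (Suc n) = (P + drift_bound) * exp K1" "gap_bound (Suc n) = P * B * exp K1"
    "bound_degree (Suc n) = D' + D"
    by (simp_all add: A_def B_def D_def P_def D'_def)
  show ?case
    unfolding bound_Suc Y_def[symmetric]
    using segment_norm_le_power[OF X nominal_control_bounded _ Y P start(1)]
      segment_norm_le_power[OF Xe needle_control_bounded _ Y P start(2)] gap Suc.prems
    by simp
qed

lemma final_cost_gap_le:
  assumes T: "1 \<le> T"
  shows "\<bar>h (hybrid_final g T y Xe) - h (hybrid_final g T y X)\<bar>
    \<le> \<epsilon> * final_gap_const * obs_size y ^ final_degree"
proof -
  define n where "n = T - 1"
  define Y A B D where "Y = obs_size y" and "A = state_bound n" and "B = gap_bound n"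
    and "D = bound_degree n"
  define P D' where "P = reset_growth A 1" and "D' = D * L1 + L2"
  have n: "n < T" "Suc n = T" using T by (simp_all add: n_def)
  have bounds: "norm (X T T) \<le> A * Y ^ D" "norm (Xe T T) \<le> A * Y ^ D"
    "norm (Xe T T - X T T) \<le> \<epsilon> * B * Y ^ D"
    using segment_endpoint_bounds[OF n(1)] unfolding n(2) by (simp_all add: Y_def A_def B_def D_def)
  have Y: "1 \<le> Y" and A: "0 \<le> A" and P: "0 \<le> P" and y: "norm (y T) \<le> Y"
    using one_le_obs_size state_bound_nonneg reset_growth_nonneg norm_le_obs_size[of T y] T
    by (simp_all add: Y_def A_def P_def)
  have "\<bar>h (g (Xe T T) (y T)) - h (g (X T T) (y T))\<bar>
      \<le> cost_growth (P * Y ^ D') * norm (g (Xe T T) (y T) - g (X T T) (y T))"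
    using g_norm_le_power[OF Y A bounds(1) y] g_norm_le_power[OF Y A bounds(2) y]
    by (intro h_dist_le) (simp_all add: P_def D'_def)
  also have "\<dots> \<le> cost_growth P * Y ^ (D' * L3) * (P * Y ^ D' * (\<epsilon> * B * Y ^ D))"
    using cost_growth_le_power[OF Y P] g_dist_le_power[OF Y A bounds(1,2) y bounds(3)] cost_growth_nonneg P Y
    by (intro mult_mono) (simp_all add: P_def D'_def)
  also have "\<dots> = \<epsilon> * final_gap_const * Y ^ final_degree"
  proof -
    have "final_gap_const = cost_growth P * P * B" "final_degree = D' * L3 + D' + D"
      by (simp_all add: final_gap_const_def final_degree_def n_def P_def D'_def A_def B_def D_def)
    then show ?thesis by (simp add: power_add mult_ac)
  qed
  finally show ?thesis by (simp add: hybrid_final_def Y_def)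
qed

end

end

theorem proposition13:
  fixes f :: "'x::euclidean_space \<times> 'u::euclidean_space \<Rightarrow> 'x"
    and f' :: "'x \<times> 'u \<Rightarrow> ('x \<times> 'u) \<Rightarrow>\<^sub>L 'x"
    and g :: "'x \<Rightarrow> 'y::euclidean_space \<Rightarrow> 'x"
    and Dg :: "'x \<Rightarrow> 'y \<Rightarrow> 'x \<Rightarrow>\<^sub>L 'x"
    and h :: "'x \<Rightarrow> real"
    and Dh :: "'x \<Rightarrow> 'x \<Rightarrow>\<^sub>L real"
    and T L1 L2 L3 :: nat
    and \<rho>max K1 K2 K3 K4 K5 K6 K7 \<tau> :: real
    and x0 :: 'x and v :: 'u
  assumes T_pos: "T \<ge> 1"
    and rho_pos: "0 < \<rho>max"
    and f_C1: "\<forall>p. (f has_derivative blinfun_apply (f' p)) (at p)" "continuous_on UNIV f'"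
    and K1: "1 \<le> K1"
    and f_lip: "\<forall>x1 x2 u1 u2. u1 \<in> cball 0 \<rho>max \<longrightarrow> u2 \<in> cball 0 \<rho>max \<longrightarrow>
                 norm (f (x1, u1) - f (x2, u2)) \<le> K1 * (norm (x1 - x2) + norm (u1 - u2))"
    and g_cont: "continuous_on UNIV (\<lambda>(x, y). g x y)"
    and g_diff: "\<forall>x y. ((\<lambda>z. g z y) has_derivative blinfun_apply (Dg x y)) (at x)"
    and K25: "0 \<le> K2" "0 \<le> K3" "0 \<le> K4" "0 \<le> K5"
    and L12: "1 \<le> L1" "1 \<le> L2"
    and g_bound: "\<forall>x y. norm (g x y) \<le> K2 + K3 * norm x ^ L1 + K4 * norm y ^ L2 + K5 * norm x ^ L1 * norm y ^ L2"
    and Dg_bound: "\<forall>x y. norm (Dg x y) \<le> K2 + K3 * norm x ^ L1 + K4 * norm y ^ L2 + K5 * norm x ^ L1 * norm y ^ L2"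
    and h_diff: "\<forall>x. (h has_derivative blinfun_apply (Dh x)) (at x)"
    and K67: "0 \<le> K6" "0 \<le> K7"
    and L3: "1 \<le> L3"
    and h_bound: "\<forall>x. \<bar>h x\<bar> \<le> K6 + K7 * norm x ^ L3"
    and Dh_bound: "\<forall>x. norm (Dh x) \<le> K6 + K7 * norm x ^ L3"
    and tau: "0 < \<tau>" "\<tau> < 1"
    and v: "v \<in> cball 0 \<rho>max"
  shows "\<exists>(\<L> :: nat list set) (\<beta> :: nat list \<Rightarrow> real).
           finite \<L> \<and> (\<forall>j\<in>\<L>. length j = T) \<and> (\<forall>j\<in>\<L>. 0 < \<beta> j) \<and>
           (\<forall>u \<in> admissible_controls T \<rho>max. continuous (at_left \<tau>) u \<longrightarrow>
             (\<forall>(y :: nat \<Rightarrow> 'y) \<epsilon> X Xe. \<epsilon> \<in> {0..\<tau>} \<longrightarrow>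
                hybrid_traj f g T u x0 y X \<longrightarrow>
                hybrid_traj f g T (needle u \<tau> v \<epsilon>) x0 y Xe \<longrightarrow>
                \<bar>h (hybrid_final g T y Xe) - h (hybrid_final g T y X)\<bar>
                  \<le> \<epsilon> * (\<Sum>j\<in>\<L>. \<beta> j * (\<Prod>m\<in>{1..T}. norm (y m) ^ (j ! (m - 1))))))"
proof -
  interpret needle_variation f g Dg h Dh T L1 L2 L3 \<rho>max K1 K2 K3 K4 K5 K6 K7 \<tau> x0 v
    using assms by unfold_locales auto
  let ?\<L> = "{js. set js \<subseteq> {0, final_degree} \<and> length js = T}"
  show ?thesis
  proof (intro exI[of _ ?\<L>] exI[of _ "\<lambda>_. final_gap_const + 1"] conjI ballI allI impI)
    show "finite ?\<L>" by (rule finite_lists_length_eq) simp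
    show "length js = T" if "js \<in> ?\<L>" for js using that by simp
    show "0 < final_gap_const + 1" using final_gap_const_nonneg by linarith
    fix u :: "real \<Rightarrow> 'u" and y :: "nat \<Rightarrow> 'y" and \<epsilon> X Xe
    assume u: "u \<in> admissible_controls T \<rho>max" and \<epsilon>: "\<epsilon> \<in> {0..\<tau>}"
      and X: "hybrid_traj f g T u x0 y X" and Xe: "hybrid_traj f g T (needle u \<tau> v \<epsilon>) x0 y Xe"
    have "\<bar>h (hybrid_final g T y Xe) - h (hybrid_final g T y X)\<bar>
        \<le> \<epsilon> * (final_gap_const * obs_size y ^ final_degree)"
      using final_cost_gap_le[OF u \<epsilon> X Xe T_pos] by (simp add: mult.assoc)
    also have "\<dots> \<le> \<epsilon> * ((final_gap_const + 1)
        * (\<Sum>js\<in>?\<L>. \<Prod>m\<in>{1..T}. norm (y m) ^ (js ! (m - 1))))"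
      using obs_size_power_le_sum[of y final_degree] final_gap_const_nonneg one_le_obs_size[of y] \<epsilon>
      by (intro mult_left_mono mult_mono) auto
    finally show "\<bar>h (hybrid_final g T y Xe) - h (hybrid_final g T y X)\<bar>
        \<le> \<epsilon> * (\<Sum>js\<in>?\<L>. (final_gap_const + 1) * (\<Prod>m\<in>{1..T}. norm (y m) ^ (js ! (m - 1))))"
      by (simp add: sum_distrib_left)
  qed
qed

end
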